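(* Let $\mathcal{T}$ be a trim transducer. If $[\![\mathcal{T}]\!]$ is multi-sequential, then $\mathcal{T}$ satisfies the weak twinning property.
   Context: A transducer is a tuple $\mathcal{T}=(Q,E,I,F,f)$ with finite state set $Q$, initial states $I$, final states $F$, transitions $E\subseteq Q\times\Sigma\times\Gamma^*\times Q$ and final output function $f:F\to\Gamma^*$. We write $p\xrightarrow{u\mid w}q$ if there is a run from $p$ to $q$ reading $u$ and outputting $w$. $[\![\mathcal{T}]\!]=\{(u,wf(t)) : i\xrightarrow{u\mid w}t,\ i\in I,\ t\in F\}$. $\mathcal{T}$ is trim if every state lies on some run from an initial to a final state. Sequential transducer: single initial state and at most one transition per (state, input letter); sequential function: realised by a sequential transducer; multi-sequential relation: finite union of sequential functions. $\Delta(v,w)=v^{-1}w$ in the free group over $\Gamma$. $\mathcal{T}$ satisfies the weak twinning property if for all states $q_1,q_2$, all $u,v\in\Sigma^*$ and $u_1,u_2,v_1,v_2\in\Gamma^*$ with $q_1\xrightarrow{u\mid u_1}q_1$, $q_1\xrightarrow{v\mid v_1}q_1$, $q_1\xrightarrow{u\mid u_2}q_2$, $q_2\xrightarrow{v\mid v_2}q_2$, one has $\Delta(u_1,u_2)=\Delta(u_1v_1,u_2v_2)$. *)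

theory Defs
  imports Main
begin

record ('q, 'a, 'b) transducer =
  states :: "'q set"
  trans  :: "('q \<times> 'a \<times> 'b list \<times> 'q) set"
  init   :: "'q set"
  final  :: "'q set"
  fout   :: "'q \<Rightarrow> 'b list"

definition well_formed :: "('q, 'a, 'b) transducer \<Rightarrow> bool" where
  "well_formed T \<longleftrightarrow> finite (states T) \<and> finite (trans T) \<and>
     trans T \<subseteq> states T \<times> UNIV \<times> UNIV \<times> states T \<and>
     init T \<subseteq> states T \<and> final T \<subseteq> states T"

inductive run :: "('q, 'a, 'b) transducer \<Rightarrow> 'q \<Rightarrow> 'a list \<Rightarrow> 'b list \<Rightarrow> 'q \<Rightarrow> bool"
  for T where
  run_nil: "run T p [] [] p"
| run_cons: "(p, a, x, r) \<in> trans T \<Longrightarrow> run T r u w q \<Longrightarrow> run T p (a # u) (x @ w) q"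

definition rel :: "('q, 'a, 'b) transducer \<Rightarrow> ('a list \<times> 'b list) set" where
  "rel T = {(u, w @ fout T t) | u w i t. i \<in> init T \<and> t \<in> final T \<and> run T i u w t}"

definition trim :: "('q, 'a, 'b) transducer \<Rightarrow> bool" where
  "trim T \<longleftrightarrow> (\<forall>q \<in> states T. \<exists>i \<in> init T. \<exists>t \<in> final T. \<exists>u w u' w'.
       run T i u w q \<and> run T q u' w' t)"

definition sequential :: "('q, 'a, 'b) transducer \<Rightarrow> bool" where
  "sequential T \<longleftrightarrow> well_formed T \<and> (\<exists>i. init T = {i}) \<and>
     (\<forall>p a x r x' r'. (p, a, x, r) \<in> trans T \<and> (p, a, x', r') \<in> trans T \<longrightarrow> x = x' \<and> r = r')"

text \<open>A sequential function: realised by some sequential transducer (finite state set,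
  w.l.o.g. states are natural numbers).\<close>
definition sequential_function :: "('a list \<times> 'b list) set \<Rightarrow> bool" where
  "sequential_function R \<longleftrightarrow> (\<exists>T :: (nat, 'a, 'b) transducer. sequential T \<and> rel T = R)"

definition multi_sequential :: "('a list \<times> 'b list) set \<Rightarrow> bool" where
  "multi_sequential R \<longleftrightarrow> (\<exists>S. finite S \<and> (\<forall>R' \<in> S. sequential_function R') \<and> R = \<Union> S)"

text \<open>Free group over 'b: words over 'b \<times> bool (True = generator, False = its inverse),
  with free reduction computed by a stack.\<close>
fun red_push :: "'b \<times> bool \<Rightarrow> ('b \<times> bool) list \<Rightarrow> ('b \<times> bool) list" where
  "red_push x [] = [x]"
| "red_push x (y # ys) = (if fst x = fst y \<and> snd x \<noteq> snd y then ys else x # y # ys)"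

definition fg_reduce :: "('b \<times> bool) list \<Rightarrow> ('b \<times> bool) list" where
  "fg_reduce w = rev (foldl (\<lambda>st x. red_push x st) [] w)"

definition fg_inv :: "'b list \<Rightarrow> ('b \<times> bool) list" where
  "fg_inv v = map (\<lambda>c. (c, False)) (rev v)"

definition fg_of :: "'b list \<Rightarrow> ('b \<times> bool) list" where
  "fg_of w = map (\<lambda>c. (c, True)) w"

definition delay :: "'b list \<Rightarrow> 'b list \<Rightarrow> ('b \<times> bool) list" where
  "delay v w = fg_reduce (fg_inv v @ fg_of w)"

definition weak_twinning :: "('q, 'a, 'b) transducer \<Rightarrow> bool" where
  "weak_twinning T \<longleftrightarrow> (\<forall>q1 \<in> states T. \<forall>q2 \<in> states T. \<forall>u v u1 u2 v1 v2.
     run T q1 u u1 q1 \<and> run T q1 v v1 q1 \<and> run T q1 u u2 q2 \<and> run T q2 v v2 q2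
     \<longrightarrow> delay u1 u2 = delay (u1 @ v1) (u2 @ v2))"

end

theory Submission
  imports Defs
begin

text \<open>Suppose \<open>rel T\<close> is a union of \<open>K\<close> sequential functions. For exponents
  \<open>f 0, f 1, \<dots>\<close> consider the \<open>K + 1\<close> inputs \<open>x (u v^f 0) \<dots> (u v^f (j - 1)) u v^f j y\<close>: after
  \<open>x\<close> they loop \<open>j\<close> times at \<open>q1\<close>, move to \<open>q2\<close> on the last block and leave by \<open>y\<close>, so
  they produce \<open>\<alpha> (u1 v1^f 0) \<dots> (u1 v1^f (j - 1)) u2 v2^f j \<gamma>\<close>. By pigeonhole two of them,
  \<open>i < i'\<close>, belong to the same sequential function. They share the input prefix ending with
  block \<open>i\<close>, and a sequential function maps inputs with a common prefix to outputs that
  differ only in suffixes of length linear in the remaining inputs. Choosing every \<open>f i\<close>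
  much larger than all lengths after block \<open>i\<close>, the outputs \<open>u2 v2^f i \<dots>\<close> and \<open>u1 v1^f i \<dots>\<close>
  must have \<open>|v1| = |v2|\<close> and agree on a long prefix. Then \<open>u1 = u2 r\<close> and \<open>r v1 = v2 r\<close>
  (or symmetrically), and \<open>\<Delta>(u1, u2) = \<Delta>(u1 v1, u2 v2)\<close> by free cancellation.\<close>

text \<open>The stack built by \<open>fg_reduce\<close> is always freely reduced; on such stacks pushing a
  letter and then its inverse changes nothing, which fails in general.\<close>

fun freely_reduced :: "('b \<times> bool) list \<Rightarrow> bool" where
  "freely_reduced (x # y # ys) \<longleftrightarrow> \<not> (fst x = fst y \<and> snd x \<noteq> snd y) \<and> freely_reduced (y # ys)"
| "freely_reduced _ \<longleftrightarrow> True"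

lemma freely_reduced_red_push: "freely_reduced st \<Longrightarrow> freely_reduced (red_push x st)"
  by (cases st rule: freely_reduced.cases) auto

lemma freely_reduced_foldl_red_push:
  "freely_reduced st \<Longrightarrow> freely_reduced (foldl (\<lambda>st x. red_push x st) st xs)"
  by (induction xs arbitrary: st) (auto simp: freely_reduced_red_push)

lemma red_push_inverse_pair:
  "freely_reduced st \<Longrightarrow> red_push (c, \<not> b) (red_push (c, b) st) = st"
  by (induction st rule: freely_reduced.induct) auto

lemma fg_reduce_cancel_pair: "fg_reduce (xs @ (c, b) # (c, \<not> b) # ys) = fg_reduce (xs @ ys)"
proof -
  have "freely_reduced (foldl (\<lambda>st x. red_push x st) [] xs)"
    by (rule freely_reduced_foldl_red_push) simp
  then show ?thesis unfolding fg_reduce_def by (simp add: red_push_inverse_pair)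
qed

lemma fg_reduce_cancel_word: "fg_reduce (xs @ fg_inv w @ fg_of w @ ys) = fg_reduce (xs @ ys)"
proof (induction w arbitrary: xs)
  case Nil
  then show ?case by (simp add: fg_inv_def fg_of_def)
next
  case (Cons a w)
  have "xs @ fg_inv (a # w) @ fg_of (a # w) @ ys
      = (xs @ fg_inv w) @ (a, False) # (a, \<not> False) # (fg_of w @ ys)"
    by (simp add: fg_inv_def fg_of_def)
  then show ?case by (simp only: fg_reduce_cancel_pair) (simp add: Cons)
qed

lemma delay_append_same: "delay (w @ a) (w @ b) = delay a b"
  using fg_reduce_cancel_word[of "fg_inv a" w "fg_of b"]
  by (simp add: delay_def fg_inv_def fg_of_def)

lemma delay_conjugate_left:
  assumes "u1 = u2 @ r" and "r @ v1 = v2 @ r"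
  shows "delay u1 u2 = delay (u1 @ v1) (u2 @ v2)"
proof -
  have "delay (u1 @ v1) (u2 @ v2) = delay (u2 @ r @ v1) (u2 @ v2)"
    using assms by simp
  also have "\<dots> = delay (v2 @ r) (v2 @ [])"
    using delay_append_same[of u2 "r @ v1" v2] delay_append_same[of v2 r "[]"] assms(2)
    by simp
  also have "\<dots> = delay (u2 @ r) (u2 @ [])"
    by (simp only: delay_append_same)
  finally show ?thesis using assms by simp
qed

lemma delay_conjugate_right:
  assumes "u2 = u1 @ r" and "v1 @ r = r @ v2"
  shows "delay u1 u2 = delay (u1 @ v1) (u2 @ v2)"
proof -
  have "delay (u1 @ v1) (u2 @ v2) = delay (u1 @ v1) (u1 @ r @ v2)"
    using assms by simp
  also have "\<dots> = delay (v1 @ []) (v1 @ r)"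
    using delay_append_same[of u1 v1 "r @ v2"] delay_append_same[of v1 "[]" r]
    by (simp flip: assms(2))
  also have "\<dots> = delay (u1 @ []) (u1 @ r)"
    by (simp only: delay_append_same)
  finally show ?thesis using assms by simp
qed

definition word_pow :: "'b list \<Rightarrow> nat \<Rightarrow> 'b list" where
  "word_pow w n = concat (replicate n w)"

lemma length_word_pow [simp]: "length (word_pow w n) = n * length w"
  by (simp add: word_pow_def length_concat sum_list_replicate)

lemma word_pow_0 [simp]: "word_pow w 0 = []"
  by (simp add: word_pow_def)

lemma word_pow_Suc: "word_pow w (Suc n) = w @ word_pow w n"
  by (simp add: word_pow_def)

lemma word_pow_Suc': "word_pow w (Suc n) = word_pow w n @ w"
  by (simp add: word_pow_def replicate_append_same[symmetric])

lemma take_eq_take_le: "k \<le> K \<Longrightarrow> take K xs = take K ys \<Longrightarrow> take k xs = take k ys"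
  by (metis min_absorb1 take_take)

lemma word_pow_prefix_conjugate:
  assumes lv: "length v1 = length v2" "v2 \<noteq> []"
    and lu: "length u2 \<le> length u1" "length u1 < n"
    and pre: "take (length u1 + length v1) (u1 @ word_pow v1 n)
            = take (length u1 + length v1) (u2 @ word_pow v2 n)"
  shows "\<exists>r. u1 = u2 @ r \<and> r @ v1 = v2 @ r"
proof -
  obtain m where n: "n = Suc m" using lu by (cases n) auto
  define d where "d = length u1 - length u2"
  define r where "r = take d (word_pow v2 n)"
  define X where "X = take (d + length v1) (word_pow v2 n)"
  have e: "u1 @ v1 = u2 @ X"
    using pre lu by (simp add: n word_pow_Suc d_def X_def)
  have "take (length u1) (u1 @ v1) = take (length u1) (u2 @ X)"
    using e by simp
  then have u1: "u1 = u2 @ r" using lu by (simp add: d_def r_def X_def)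
  have "drop (length u1) (u1 @ v1) = drop (length u1) (u2 @ X)"
    using e by simp
  then have v1: "v1 = drop d X" using lu by (simp add: d_def)
  have "d \<le> m * length v2"
    using lu lv n by (cases v2) (auto simp: d_def)
  then have "take d (word_pow v2 m) = r"
    by (simp add: r_def n word_pow_Suc')
  then have X: "X = v2 @ r"
    using lv by (simp add: X_def n word_pow_Suc)
  have "r @ v1 = take d X @ drop d X"
    using v1 by (simp add: r_def X_def)
  also have "\<dots> = X"
    by (rule append_take_drop_id)
  finally have "r @ v1 = v2 @ r"
    using X by simp
  with u1 show ?thesis by blast
qed

lemma delay_eq_if_word_pow_prefix:
  assumes lv: "length v1 = length v2" "v1 \<noteq> []"
    and n: "length u1 + length u2 < n"
    and pre: "take (length u1 + length u2 + length v1) (u1 @ word_pow v1 n)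
            = take (length u1 + length u2 + length v1) (u2 @ word_pow v2 n)"
  shows "delay u1 u2 = delay (u1 @ v1) (u2 @ v2)"
proof (cases "length u2 \<le> length u1")
  case True
  have v2: "v2 \<noteq> []" using lv by auto
  have pre': "take (length u1 + length v1) (u1 @ word_pow v1 n)
      = take (length u1 + length v1) (u2 @ word_pow v2 n)"
    by (rule take_eq_take_le[OF _ pre]) simp
  obtain r where "u1 = u2 @ r" "r @ v1 = v2 @ r"
    using word_pow_prefix_conjugate[OF lv(1) _ True _ pre'] v2 n by auto
  then show ?thesis by (rule delay_conjugate_left)
next
  case False
  have pre': "take (length u2 + length v2) (u2 @ word_pow v2 n)
      = take (length u2 + length v2) (u1 @ word_pow v1 n)"
    by (rule take_eq_take_le[OF _ pre[symmetric]]) (simp add: lv)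
  obtain r where "u2 = u1 @ r" "r @ v2 = v1 @ r"
    using word_pow_prefix_conjugate[OF lv(1)[symmetric] _ _ _ pre'] lv n False by auto
  then show ?thesis by (intro delay_conjugate_right) auto
qed

lemma run_append:
  "run T p w1 o1 m \<Longrightarrow> run T m w2 o2 q \<Longrightarrow> run T p (w1 @ w2) (o1 @ o2) q"
  by (induction rule: run.induct) (auto intro: run.intros)

lemma run_append_split:
  "run T p (w1 @ w2) ou q \<Longrightarrow> \<exists>o1 o2 m. ou = o1 @ o2 \<and> run T p w1 o1 m \<and> run T m w2 o2 q"
proof (induction w1 arbitrary: p ou)
  case Nil
  then show ?case by (auto intro: run.intros)
next
  case (Cons a w1)
  from Cons.prems obtain x r w where "(p, a, x, r) \<in> trans T" "run T r (w1 @ w2) w q" "ou = x @ w"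
    by (auto elim: run.cases)
  with Cons.IH show ?case by (metis append.assoc run.run_cons)
qed

lemma run_word_pow: "run T q w ou q \<Longrightarrow> run T q (word_pow w n) (word_pow ou n) q"
  by (induction n) (auto simp: word_pow_Suc intro: run.intros run_append)

lemma sequential_run_deterministic:
  assumes "sequential D"
  shows "run D p w ou q \<Longrightarrow> run D p w ou' q' \<Longrightarrow> ou = ou' \<and> q = q'"
proof (induction arbitrary: ou' q' rule: run.induct)
  case (run_nil p)
  then show ?case by (auto elim: run.cases)
next
  case (run_cons p a x r u w q)
  from run_cons.prems obtain x' r' w' where
    "(p, a, x', r') \<in> trans D" "run D r' u w' q'" "ou' = x' @ w'"
    by (auto elim: run.cases)
  with assms run_cons show ?case unfolding sequential_def by blast
qed

definition max_output_length :: "('q, 'a, 'b) transducer \<Rightarrow> nat" where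
  "max_output_length D = Max (insert 0 ((\<lambda>(p, a, x, r). length x) ` trans D
                                       \<union> (\<lambda>t. length (fout D t)) ` final D))"

lemma
  assumes "well_formed D"
  shows length_trans_output_le: "(p, a, x, r) \<in> trans D \<Longrightarrow> length x \<le> max_output_length D"
    and length_fout_le: "t \<in> final D \<Longrightarrow> length (fout D t) \<le> max_output_length D"
proof -
  have "finite (insert 0 ((\<lambda>(p, a, x, r). length x) ` trans D \<union> (\<lambda>t. length (fout D t)) ` final D))"
    using assms unfolding well_formed_def by (auto intro: finite_subset)
  note bound = Max_ge[OF this, folded max_output_length_def]
  show "length x \<le> max_output_length D" if "(p, a, x, r) \<in> trans D"
    by (intro bound insertI2 UnI1 rev_image_eqI[OF that]) simp
  show "length (fout D t) \<le> max_output_length D" if "t \<in> final D"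
    by (intro bound insertI2 UnI2 rev_image_eqI[OF that]) simp
qed

lemma length_run_output_le:
  assumes "well_formed D"
  shows "run D p w ou q \<Longrightarrow> length ou \<le> max_output_length D * length w"
  by (induction rule: run.induct) (auto dest: length_trans_output_le[OF assms])

lemma rel_memI: "i \<in> init T \<Longrightarrow> t \<in> final T \<Longrightarrow> run T i u w t \<Longrightarrow> (u, w @ fout T t) \<in> rel T"
  unfolding rel_def by blast

definition bounded_divergence :: "nat \<Rightarrow> ('a list \<times> 'b list) set \<Rightarrow> bool" where
  "bounded_divergence C R \<longleftrightarrow> (\<forall>p s1 s2 O1 O2. (p @ s1, O1) \<in> R \<longrightarrow> (p @ s2, O2) \<in> R \<longrightarrow>
     (\<exists>ou r1 r2. O1 = ou @ r1 \<and> O2 = ou @ r2 \<and>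
        length r1 \<le> C * (length s1 + 1) \<and> length r2 \<le> C * (length s2 + 1)))"

lemma bounded_divergence_mono:
  "bounded_divergence C R \<Longrightarrow> C \<le> C' \<Longrightarrow> bounded_divergence C' R"
  unfolding bounded_divergence_def by (meson dual_order.trans mult_le_mono1)

lemma sequential_bounded_divergence:
  assumes D: "sequential D"
  shows "bounded_divergence (max_output_length D) (rel D)"
  unfolding bounded_divergence_def
proof (intro allI impI)
  fix p s1 s2 O1 O2
  assume "(p @ s1, O1) \<in> rel D" "(p @ s2, O2) \<in> rel D"
  let ?C = "max_output_length D"
  have wf: "well_formed D" using D unfolding sequential_def by simp
  obtain i where i: "init D = {i}" using D unfolding sequential_def by blast
  have "\<exists>x m y. out = x @ y \<and> run D i p x m \<and> length y \<le> ?C * (length s + 1)"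
    if mem: "(p @ s, out) \<in> rel D" for s out
  proof -
    obtain w t where t: "t \<in> final D" "run D i (p @ s) w t" "out = w @ fout D t"
      using mem i unfolding rel_def by auto
    then obtain x o' m where "w = x @ o'" "run D i p x m" "run D m s o' t"
      using run_append_split by metis
    moreover have "length (o' @ fout D t) \<le> ?C * (length s + 1)"
      using length_run_output_le[OF wf \<open>run D m s o' t\<close>] length_fout_le[OF wf t(1)] by simp
    ultimately show ?thesis using t(3) by (metis append.assoc)
  qed
  then obtain o1 m1 o1' o2 m2 o2' where
    "O1 = o1 @ o1'" "run D i p o1 m1" "length o1' \<le> ?C * (length s1 + 1)"
    "O2 = o2 @ o2'" "run D i p o2 m2" "length o2' \<le> ?C * (length s2 + 1)"
    using \<open>(p @ s1, O1) \<in> rel D\<close> \<open>(p @ s2, O2) \<in> rel D\<close> by meson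
  with sequential_run_deterministic[OF D] show
    "\<exists>ou r1 r2. O1 = ou @ r1 \<and> O2 = ou @ r2 \<and>
       length r1 \<le> ?C * (length s1 + 1) \<and> length r2 \<le> ?C * (length s2 + 1)"
    by metis
qed

lemma sequential_function_bounded_divergence:
  "sequential_function R \<Longrightarrow> \<exists>C. bounded_divergence C R"
  unfolding sequential_function_def using sequential_bounded_divergence by blast

lemma finite_bounded_divergence_uniform:
  assumes "finite S" and "\<And>R. R \<in> S \<Longrightarrow> \<exists>C. bounded_divergence C R"
  shows "\<exists>C. \<forall>R \<in> S. bounded_divergence C R"
  using assms
proof (induction S rule: finite_induct)
  case empty
  then show ?case by simp
next
  case (insert R S)
  then obtain C1 C2 where "bounded_divergence C1 R" "\<forall>R' \<in> S. bounded_divergence C2 R'"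
    by blast
  then have "\<forall>R' \<in> insert R S. bounded_divergence (max C1 C2) R'"
    using bounded_divergence_mono max.cobounded1 max.cobounded2 by blast
  then show ?case ..
qed

lemma mult_add_eq_mult_add_imp_eq:
  fixes n a b p q :: nat
  assumes "n * a + p = n * b + q" and "p < n" and "q < n"
  shows "a = b"
proof -
  have "(n * a + p) div n = a" "(n * b + q) div n = b"
    using assms(2,3) by simp_all
  with assms(1) show ?thesis by simp
qed

lemma take_common_prefix_of_append_eq:
  assumes "A @ X = w @ r1" and "A @ Y = w @ r2"
  shows "take (length X - length r1) X = take (length X - length r1) Y"
proof (cases "length r1 \<le> length X")
  case True
  let ?k = "length X - length r1"
  have "length w = length A + ?k" using arg_cong[OF assms(1), of length] True by simp
  then have "A @ take ?k X = A @ take ?k Y"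
    using arg_cong[OF assms(1), of "take (length w)"] arg_cong[OF assms(2), of "take (length w)"]
    by simp
  then show ?thesis by simp
qed simp

lemma bounded_divergence_pumped_pair:
  assumes R: "bounded_divergence C R"
    and mem: "(p @ y, A @ u2 @ word_pow v2 n @ \<gamma>) \<in> R" "(p @ s, A @ u1 @ word_pow v1 n @ E) \<in> R"
    and n: "length u1 + length u2 + length v1 + length \<gamma> + length E
              + C * (length y + length s + 2) < n"
  shows "length v1 = length v2 \<and> (v1 \<noteq> [] \<longrightarrow>
           take (length u1 + length u2 + length v1) (u1 @ word_pow v1 n)
         = take (length u1 + length u2 + length v1) (u2 @ word_pow v2 n))"
proof -
  define X where "X = u2 @ word_pow v2 n @ \<gamma>"
  define Y where "Y = u1 @ word_pow v1 n @ E"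
  obtain w r1 r2 where out: "A @ X = w @ r1" "A @ Y = w @ r2"
    and r: "length r1 \<le> C * (length y + 1)" "length r2 \<le> C * (length s + 1)"
    using R mem unfolding bounded_divergence_def X_def Y_def by meson
  have "C * (length y + 1) + C * (length s + 1) = C * (length y + length s + 2)"
    by (simp add: algebra_simps)
  with r n have short: "length r1 + length u1 + length E < n" "length r2 + length u2 + length \<gamma> < n"
      "length r1 + length u1 + length v1 < n" "length u1 + length u2 + length v1 < n"
    by linarith+
  have lens: "length u2 + n * length v2 + length \<gamma> + length r2
            = length u1 + n * length v1 + length E + length r1"
    using arg_cong[OF out(1), of length] arg_cong[OF out(2), of length]
    by (simp add: X_def Y_def)
  have lv: "length v1 = length v2"
    by (rule mult_add_eq_mult_add_imp_eq[of n _ "length u1 + length E + length r1" _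
          "length u2 + length \<gamma> + length r2"]) (use lens short in linarith)+
  moreover have "take (length u1 + length u2 + length v1) (u1 @ word_pow v1 n)
               = take (length u1 + length u2 + length v1) (u2 @ word_pow v2 n)"
    if "v1 \<noteq> []"
  proof -
    let ?k = "length u1 + length u2 + length v1"
    have "n * 1 \<le> n * length v2"
      using that lv by (intro mult_le_mono2) (cases v1, auto)
    moreover have "length X = length u2 + n * length v2 + length \<gamma>"
      by (simp add: X_def)
    ultimately have k: "?k \<le> length X - length r1" "?k \<le> length u2 + n * length v2"
      "?k \<le> length u1 + n * length v1"
      using short lv arg_cong[OF lv, of "(*) n"] by linarith+
    have "take ?k X = take ?k Y"
      by (rule take_eq_take_le[OF k(1) take_common_prefix_of_append_eq[OF out]])
    with k lv show ?thesis by (simp add: X_def Y_def)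
  qed
  ultimately show ?thesis by blast
qed

definition pumped :: "'b list \<Rightarrow> 'b list \<Rightarrow> (nat \<Rightarrow> nat) \<Rightarrow> nat list \<Rightarrow> 'b list" where
  "pumped u v f js = concat (map (\<lambda>j. u @ word_pow v (f j)) js)"

lemma pumped_simps [simp]:
  "pumped u v f [] = []"
  "pumped u v f (j # js) = u @ word_pow v (f j) @ pumped u v f js"
  "pumped u v f (js @ ks) = pumped u v f js @ pumped u v f ks"
  by (simp_all add: pumped_def)

lemma pumped_upt_split:
  "i < i' \<Longrightarrow>
    pumped u v f [0..<i'] = pumped u v f [0..<i] @ u @ word_pow v (f i) @ pumped u v f [Suc i..<i']"
  using upt_add_eq_append[of 0 i "i' - i"] upt_conv_Cons[of i i'] by simp

lemma run_pumped:
  "run T q u u' q \<Longrightarrow> run T q v v' q \<Longrightarrow> run T q (pumped u v f js) (pumped u' v' f js) q"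
  by (induction js) (auto intro: run.intros run_append run_word_pow)

lemma length_pumped_le:
  assumes "\<forall>j \<in> set js. f j \<le> b" and "length js \<le> N" and "length u \<le> L" and "length v \<le> L"
  shows "length (pumped u v f js) \<le> N * ((b + 1) * L)"
proof -
  have "length (pumped u v f js) \<le> length js * ((b + 1) * L)"
    using assms(1)
  proof (induction js)
    case (Cons j js)
    have "f j * length v \<le> b * L" using Cons.prems assms(4) by (simp add: mult_le_mono)
    with Cons assms(3) show ?case by (simp add: algebra_simps)
  qed simp
  also have "\<dots> \<le> N * ((b + 1) * L)"
    using assms(2) by (rule mult_le_mono1)
  finally show ?thesis .
qed

lemma pumped_in_rel:
  assumes "i \<in> init T" "run T i x \<alpha> q1"
    and "run T q1 u u1 q1" "run T q1 v v1 q1" "run T q1 u u2 q2" "run T q2 v v2 q2"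
    and "run T q2 y \<beta> t" "t \<in> final T"
  shows "(x @ pumped u v f js @ u @ word_pow v n @ y,
          \<alpha> @ pumped u1 v1 f js @ u2 @ word_pow v2 n @ \<beta> @ fout T t) \<in> rel T"
proof -
  have "run T i (x @ pumped u v f js @ u @ word_pow v n @ y)
                (\<alpha> @ pumped u1 v1 f js @ u2 @ word_pow v2 n @ \<beta>) t"
    using run_append[OF assms(2) run_append[OF run_pumped[OF assms(3,4)]
            run_append[OF assms(5) run_append[OF run_word_pow[OF assms(6)] assms(7)]]]] .
  from rel_memI[OF assms(1,8) this] show ?thesis by simp
qed

lemma pigeonhole_same_member:
  assumes "finite S" and "card S \<le> K" and "\<And>j. j \<le> K \<Longrightarrow> P j \<in> \<Union>S"
  shows "\<exists>i i' R. i < i' \<and> i' \<le> K \<and> R \<in> S \<and> P i \<in> R \<and> P i' \<in> R"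
proof -
  define h where "h j = (SOME R. R \<in> S \<and> P j \<in> R)" for j
  have h: "h j \<in> S \<and> P j \<in> h j" if "j \<le> K" for j
    unfolding h_def by (rule someI_ex) (use assms(3)[OF that] in blast)
  have "\<not> inj_on h {0..K}"
  proof
    assume "inj_on h {0..K}"
    moreover have "h ` {0..K} \<subseteq> S" using h by auto
    ultimately have "card {0..K} \<le> card S" using card_inj_on_le assms(1) by blast
    with assms(2) show False by simp
  qed
  then obtain i i' where "i < i'" "i' \<le> K" "h i = h i'"
    unfolding inj_on_def by (metis atLeastAtMost_iff le0 linorder_neqE_nat)
  with h[of i] h[of i'] show ?thesis by auto
qed

lemma bounded_divergence_pumped_blocks:
  assumes R: "bounded_divergence C R"
    and ii: "i < i'" "i' \<le> K"
    and mem: "(x @ pumped u v f [0..<i] @ u @ word_pow v (f i) @ y,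
               \<alpha> @ pumped u1 v1 f [0..<i] @ u2 @ word_pow v2 (f i) @ \<gamma>) \<in> R"
             "(x @ pumped u v f [0..<i'] @ u @ word_pow v (f i') @ y,
               \<alpha> @ pumped u1 v1 f [0..<i'] @ u2 @ word_pow v2 (f i') @ \<gamma>) \<in> R"
    and fb: "\<forall>k \<in> {Suc i..i'}. f k \<le> b"
    and L: "length u + length v + length u1 + length v1 + length u2 + length v2
              + length y + length \<gamma> \<le> L"
    and big: "L + (K + 2) * ((b + 1) * L) + C * (L + (K + 2) * ((b + 1) * L) + 2) < f i"
  shows "length u1 + length u2 < f i \<and> length v1 = length v2 \<and> (v1 \<noteq> [] \<longrightarrow>
           take (length u1 + length u2 + length v1) (u1 @ word_pow v1 (f i))
         = take (length u1 + length u2 + length v1) (u2 @ word_pow v2 (f i)))"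
proof -
  define G where "G = (K + 2) * ((b + 1) * L)"
  \<comment> \<open>Both inputs start with \<open>p\<close>; block \<open>i\<close> leads to \<open>q2\<close> in the first run but loops at
      \<open>q1\<close> in the second, so \<open>u2 v2^f i\<close> is compared with \<open>u1 v1^f i\<close>.\<close>
  define p where "p = x @ pumped u v f [0..<i] @ u @ word_pow v (f i)"
  define s where "s = pumped u v f [Suc i..<Suc i'] @ y"
  define A where "A = \<alpha> @ pumped u1 v1 f [0..<i]"
  define E where "E = pumped u1 v1 f [Suc i..<i'] @ pumped u2 v2 f [i'] @ \<gamma>"
  have mem': "(p @ y, A @ u2 @ word_pow v2 (f i) @ \<gamma>) \<in> R"
    "(p @ s, A @ u1 @ word_pow v1 (f i) @ E) \<in> R"
    using mem ii(1) by (simp_all add: pumped_upt_split[OF ii(1)] p_def s_def A_def E_def)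
  have "length (pumped u v f [Suc i..<Suc i']) \<le> K * ((b + 1) * L)"
    "length (pumped u1 v1 f [Suc i..<i']) \<le> K * ((b + 1) * L)"
    "length (pumped u2 v2 f [i']) \<le> 1 * ((b + 1) * L)"
    using ii fb L by (intro length_pumped_le; simp)+
  moreover have "L \<le> (b + 1) * L" "G = K * ((b + 1) * L) + (b + 1) * L + (b + 1) * L"
    by (simp_all add: G_def algebra_simps)
  ultimately have "length s \<le> G" "length E \<le> G"
    using L unfolding s_def E_def by simp_all
  then have "C * (length y + length s + 2) \<le> C * (L + G + 2)"
    using L by simp
  with \<open>length E \<le> G\<close> L big have n:
    "length u1 + length u2 + length v1 + length \<gamma> + length E + C * (length y + length s + 2) < f i"
    unfolding G_def by linarith
  then have "length u1 + length u2 < f i"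
    by linarith
  with bounded_divergence_pumped_pair[OF R mem' n] show ?thesis
    by blast
qed

lemma descending_iterates:
  fixes F :: "nat \<Rightarrow> nat"
  assumes "mono F"
  obtains f :: "nat \<Rightarrow> nat" where "\<And>j. j < K \<Longrightarrow> f j = F (f (Suc j))" and "antimono f"
proof
  show "(\<lambda>j. (F ^^ (K - j)) 0) j = F ((\<lambda>j. (F ^^ (K - j)) 0) (Suc j))" if "j < K" for j
    using that by (simp flip: Suc_diff_Suc)
  show "antimono (\<lambda>j. (F ^^ (K - j)) 0)"
    using funpow_decreasing[OF _ assms] by (intro antimonoI) (simp add: bot_nat_def)
qed

lemma bounded_divergence_pumping:
  fixes S :: "('a list \<times> 'b list) set set"
  assumes S: "finite S" "\<forall>R \<in> S. bounded_divergence C R"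
    and mem: "\<And>f j. (x @ pumped u v f [0..<j] @ u @ word_pow v (f j) @ y,
                      \<alpha> @ pumped u1 v1 f [0..<j] @ u2 @ word_pow v2 (f j) @ \<gamma>) \<in> \<Union>S"
  shows "\<exists>n. length u1 + length u2 < n \<and> length v1 = length v2 \<and> (v1 \<noteq> [] \<longrightarrow>
           take (length u1 + length u2 + length v1) (u1 @ word_pow v1 n)
         = take (length u1 + length u2 + length v1) (u2 @ word_pow v2 n))"
proof -
  define K where "K = card S"
  define L where "L = length u + length v + length u1 + length v1 + length u2 + length v2
                      + length y + length \<gamma>"
  \<comment> \<open>\<open>f i = F (f (Suc i))\<close> exceeds every length occurring after block \<open>i\<close>.\<close>
  define F where "F b = L + (K + 2) * ((b + 1) * L) + C * (L + (K + 2) * ((b + 1) * L) + 2) + 1"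
    for b
  have "mono F"
    unfolding mono_def F_def by (auto intro!: add_mono mult_le_mono)
  then obtain f where f_step: "\<And>j. j < K \<Longrightarrow> f j = F (f (Suc j))" and "antimono f"
    using descending_iterates[of F K] by blast
  define W where "W j = (x @ pumped u v f [0..<j] @ u @ word_pow v (f j) @ y,
                         \<alpha> @ pumped u1 v1 f [0..<j] @ u2 @ word_pow v2 (f j) @ \<gamma>)" for j
  have "\<exists>i i' R. i < i' \<and> i' \<le> K \<and> R \<in> S \<and> W i \<in> R \<and> W i' \<in> R"
    using S(1) by (rule pigeonhole_same_member) (simp_all only: K_def W_def mem order.refl)
  then obtain i i' R where ii: "i < i'" "i' \<le> K" and R: "R \<in> S" "W i \<in> R" "W i' \<in> R"
    by blast
  have "\<forall>k \<in> {Suc i..i'}. f k \<le> f (Suc i)"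
    using \<open>antimono f\<close> by (auto intro: antimonoD)
  moreover have "f i = F (f (Suc i))"
    using f_step ii by simp
  then have "L + (K + 2) * ((f (Suc i) + 1) * L) + C * (L + (K + 2) * ((f (Suc i) + 1) * L) + 2)
               < f i"
    unfolding F_def by simp
  moreover have "bounded_divergence C R"
    using S(2) R(1) by blast
  moreover have "length u + length v + length u1 + length v1 + length u2 + length v2
                   + length y + length \<gamma> \<le> L"
    by (simp add: L_def)
  ultimately show ?thesis
    using bounded_divergence_pumped_blocks[OF _ ii R(2,3)[unfolded W_def]] by blast
qed

theorem lemma3:
  fixes T :: "('q, 'a, 'b) transducer"
  assumes "well_formed T"
    and "trim T"
    and "multi_sequential (rel T)"
  shows "weak_twinning T"
  unfolding weak_twinning_def
proof (intro ballI allI impI, elim conjE)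
  fix q1 q2 u v u1 u2 v1 v2
  assume "q1 \<in> states T" "q2 \<in> states T"
    and loops: "run T q1 u u1 q1" "run T q1 v v1 q1" "run T q1 u u2 q2" "run T q2 v v2 q2"
  obtain i x \<alpha> where i: "i \<in> init T" "run T i x \<alpha> q1"
    using assms(2) \<open>q1 \<in> states T\<close> unfolding trim_def by blast
  obtain t y \<beta> where t: "t \<in> final T" "run T q2 y \<beta> t"
    using assms(2) \<open>q2 \<in> states T\<close> unfolding trim_def by blast
  obtain S where S: "finite S" "\<forall>R \<in> S. sequential_function R" "rel T = \<Union>S"
    using assms(3) unfolding multi_sequential_def by blast
  obtain C where "\<forall>R \<in> S. bounded_divergence C R"
    using finite_bounded_divergence_uniform[OF S(1)] S(2) sequential_function_bounded_divergence
    by blast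
  from bounded_divergence_pumping[OF S(1) this, of x u v y \<alpha> u1 v1 u2 v2 "\<beta> @ fout T t"]
  obtain n where n: "length u1 + length u2 < n" and lv: "length v1 = length v2"
    and pre: "v1 \<noteq> [] \<Longrightarrow> take (length u1 + length u2 + length v1) (u1 @ word_pow v1 n)
                = take (length u1 + length u2 + length v1) (u2 @ word_pow v2 n)"
    using pumped_in_rel[OF i loops t(2,1)] S(3) by blast
  show "delay u1 u2 = delay (u1 @ v1) (u2 @ v2)"
  proof (cases "v1 = []")
    case True
    with lv show ?thesis by simp
  next
    case False
    from delay_eq_if_word_pow_prefix[OF lv this n pre[OF this]] show ?thesis .
  qed
qed

end
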